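(* Let $\mathcal{X}\subset\mathbb{R}$ be finite or countable, $\Theta\subset\mathbb{R}^m$, and for each $\theta\in\Theta$ let $P^\theta=(p^\theta_{ij})_{i,j\in\mathcal{X}}$ be the transition matrix of a time-homogeneous Markov chain $(X_n)$ on $\mathcal{X}$ which is ergodic under $\mathbb{P}^\theta$. Let $\hat F^\theta(x,x')$, $x,x'\in\mathbb{R}$, denote the distribution function of $(X_0,X_1)$ when $X_0$ has the (unique) invariant distribution $\pi^\theta$ of the chain, i.e. $\hat F^\theta(x,x')=\sum_{i\le x}\sum_{j\le x'}\pi^\theta(i)p^\theta_{ij}$. If all transition probabilities $p^\theta_{ij}$, $i,j\in\mathcal{X}$, are Borel measurable in $\theta$, then for each pair $(x,x')\in\mathbb{R}^2$ the function $\theta\mapsto\hat F^\theta(x,x')$ is Borel measurable.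
   Context: A time-homogeneous Markov chain $(X_n)$ is called ergodic if there exists a probability measure $\mu$, not depending on the initial distribution $\mu_0$, such that for every initial distribution $\mu_0$, $\lim_{t\to\infty}\|\mathbb{P}_{\mu_0}(X_t\in\cdot)-\mu\|_{TV}=0$, where $\|\mu-\nu\|_{TV}=2\sup_A(\mu(A)-\nu(A))$; $\mu$ is then the unique invariant distribution. *)

theory Defs
  imports "HOL-Probability.Probability"
begin

text \<open>A Markov chain on a countable state space X \<subseteq> real with transition kernel
  K i (a probability mass function; p_ij = pmf (K i) j).\<close>

definition law_at :: "(real \<Rightarrow> real pmf) \<Rightarrow> real pmf \<Rightarrow> nat \<Rightarrow> real pmf" where
  "law_at K mu0 t = ((\<lambda>\<nu>. bind_pmf \<nu> K) ^^ t) mu0"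

definition tv_dist :: "real pmf \<Rightarrow> real pmf \<Rightarrow> real" where
  "tv_dist mu nu = 2 * (SUP A. measure_pmf.prob mu A - measure_pmf.prob nu A)"

definition markov_kernel_on :: "real set \<Rightarrow> (real \<Rightarrow> real pmf) \<Rightarrow> bool" where
  "markov_kernel_on X K \<longleftrightarrow> (\<forall>i\<in>X. set_pmf (K i) \<subseteq> X)"

definition ergodic_chain :: "real set \<Rightarrow> (real \<Rightarrow> real pmf) \<Rightarrow> bool" where
  "ergodic_chain X K \<longleftrightarrow> (\<exists>mu::real pmf. \<forall>mu0::real pmf. set_pmf mu0 \<subseteq> X \<longrightarrow>
      ((\<lambda>t. tv_dist (law_at K mu0 t) mu) \<longlonglongrightarrow> 0))"

definition invariant_distribution :: "real set \<Rightarrow> (real \<Rightarrow> real pmf) \<Rightarrow> real pmf \<Rightarrow> bool" where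
  "invariant_distribution X K \<pi> \<longleftrightarrow> set_pmf \<pi> \<subseteq> X \<and> bind_pmf \<pi> K = \<pi>"

definition inv_dist :: "real set \<Rightarrow> (real \<Rightarrow> real pmf) \<Rightarrow> real pmf" where
  "inv_dist X K = (THE \<pi>. invariant_distribution X K \<pi>)"

definition Fhat :: "real set \<Rightarrow> (real \<Rightarrow> real pmf) \<Rightarrow> real \<Rightarrow> real \<Rightarrow> real" where
  "Fhat X K x x' = (\<Sum>\<^sub>\<infinity>i\<in>{i\<in>X. i \<le> x}.
       \<Sum>\<^sub>\<infinity>j\<in>{j\<in>X. j \<le> x'}. pmf (inv_dist X K) i * pmf (K i) j)"

end

theory Submission
  imports Defs
begin

text \<open>
  For an ergodic chain the limit measure of the definition is the invariant distribution:
  it is invariant by Fatou's lemma applied to the one-step equation, and any invariant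
  distribution, being a constant trajectory, must coincide with it.  Hence
  \<open>\<pi>\<^sup>\<theta>(i)\<close> is the pointwise limit in \<open>\<theta>\<close> of the \<open>t\<close>-step probabilities
  \<open>\<P>\<^sup>\<theta>(X\<^sub>t = i | X\<^sub>0 = i\<^sub>0)\<close>.  These are measurable in \<open>\<theta>\<close>, being iterated
  countable sums of products of the measurable entries \<open>p\<^sup>\<theta>\<^sub>i\<^sub>j\<close>, so \<open>\<pi>\<^sup>\<theta>(i)\<close> is
  measurable, and so is \<open>F\<^sup>\<theta>(x,x')\<close>, a countable double sum of the nonnegative products
  \<open>\<pi>\<^sup>\<theta>(i) p\<^sup>\<theta>\<^sub>i\<^sub>j\<close>.
\<close>

lemma tv_dist_ge_abs_prob_diff:
  "2 * \<bar>measure_pmf.prob p A - measure_pmf.prob q A\<bar> \<le> tv_dist p q"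
proof -
  have bdd: "bdd_above (range (\<lambda>A. measure_pmf.prob p A - measure_pmf.prob q A))"
    by (intro bdd_aboveI[where M=1]) (clarsimp, smt (verit) measure_pmf.prob_le_1 measure_nonneg)
  have le: "2 * (measure_pmf.prob p B - measure_pmf.prob q B) \<le> tv_dist p q" for B
    unfolding tv_dist_def using cSUP_upper[OF UNIV_I bdd, of B] by simp
  have compl: "measure_pmf.prob r (UNIV - A) = 1 - measure_pmf.prob r A" for r :: "real pmf"
    using measure_pmf.prob_compl[of A r] by simp
  show ?thesis
    using le[of A] le[of "UNIV - A"] compl[of p] compl[of q] by (simp add: abs_if)
qed

lemma prob_tendsto_of_tv_dist_tendsto:
  assumes "(\<lambda>t. tv_dist (p t) q) \<longlonglongrightarrow> 0"
  shows "(\<lambda>t. measure_pmf.prob (p t) A) \<longlonglongrightarrow> measure_pmf.prob q A"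
proof -
  have "(\<lambda>t. measure_pmf.prob (p t) A - measure_pmf.prob q A) \<longlonglongrightarrow> 0"
  proof (rule Lim_null_comparison)
    show "\<forall>\<^sub>F t in sequentially.
        norm (measure_pmf.prob (p t) A - measure_pmf.prob q A) \<le> tv_dist (p t) q / 2"
      using tv_dist_ge_abs_prob_diff by (intro always_eventually) (simp add: field_simps)
    show "(\<lambda>t. tv_dist (p t) q / 2) \<longlonglongrightarrow> 0"
      using tendsto_divide[OF assms tendsto_const, of 2] by simp
  qed
  then show ?thesis by (simp add: LIM_zero_iff)
qed

lemma pmf_tendsto_of_tv_dist_tendsto:
  assumes "(\<lambda>t. tv_dist (p t) q) \<longlonglongrightarrow> 0"
  shows "(\<lambda>t. pmf (p t) i) \<longlonglongrightarrow> pmf q i"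
  using prob_tendsto_of_tv_dist_tendsto[OF assms, of "{i}"] by (simp add: measure_pmf_single)

lemma pmf_eqI_le:
  assumes le: "\<And>j. pmf p j \<le> pmf q j"
  shows "p = q"
proof (rule pmf_eqI)
  fix j
  have "emeasure (measure_pmf p) (UNIV - {j}) \<le> emeasure (measure_pmf q) (UNIV - {j})"
    unfolding nn_integral_pmf[symmetric] by (intro nn_integral_mono) (simp add: le)
  then have "measure_pmf.prob p (UNIV - {j}) \<le> measure_pmf.prob q (UNIV - {j})"
    by (simp add: measure_pmf.emeasure_eq_measure)
  then have "pmf q j \<le> pmf p j"
    using measure_pmf.prob_compl[of "{j}" p] measure_pmf.prob_compl[of "{j}" q]
    by (simp add: measure_pmf_single)
  with le[of j] show "pmf p j = pmf q j" by simp
qed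

lemma pmf_bind_le_of_pmf_tendsto:
  assumes lim: "\<And>i. (\<lambda>t. pmf (p t) i) \<longlonglongrightarrow> pmf q i"
    and lim_bind: "(\<lambda>t. pmf (bind_pmf (p t) K) j) \<longlonglongrightarrow> l"
  shows "pmf (bind_pmf q K) j \<le> l"
proof -
  let ?u = "\<lambda>t i. ennreal (pmf (p t) i * pmf (K i) j)"
  have "ennreal (pmf (bind_pmf q K) j) = (\<integral>\<^sup>+ i. ennreal (pmf q i * pmf (K i) j) \<partial>count_space UNIV)"
    by (simp add: ennreal_pmf_bind nn_integral_measure_pmf ennreal_mult'')
  also have "\<dots> = (\<integral>\<^sup>+ i. liminf (\<lambda>t. ?u t i) \<partial>count_space UNIV)"
    by (intro nn_integral_cong lim_imp_Liminf[symmetric] trivial_limit_sequentially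
        tendsto_ennrealI tendsto_mult tendsto_const lim)
  also have "\<dots> \<le> liminf (\<lambda>t. \<integral>\<^sup>+ i. ?u t i \<partial>count_space UNIV)"
    by (rule nn_integral_liminf) simp
  also have "(\<lambda>t. \<integral>\<^sup>+ i. ?u t i \<partial>count_space UNIV) = (\<lambda>t. ennreal (pmf (bind_pmf (p t) K) j))"
    by (simp add: ennreal_pmf_bind nn_integral_measure_pmf ennreal_mult'')
  also have "liminf \<dots> = ennreal l"
    by (intro lim_imp_Liminf trivial_limit_sequentially tendsto_ennrealI lim_bind)
  finally show ?thesis
    using LIMSEQ_le_const[OF lim_bind, of 0] by (simp add: ennreal_le_iff)
qed

lemma law_at_0 [simp]: "law_at K mu0 0 = mu0"
  by (simp add: law_at_def)

lemma law_at_Suc: "law_at K mu0 (Suc t) = bind_pmf (law_at K mu0 t) K"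
  by (simp add: law_at_def)

lemma set_pmf_law_at_subset:
  assumes "markov_kernel_on X K" "set_pmf mu0 \<subseteq> X"
  shows "set_pmf (law_at K mu0 t) \<subseteq> X"
  using assms by (induction t) (auto simp: law_at_Suc markov_kernel_on_def)

lemma law_at_invariant:
  assumes "bind_pmf \<pi> K = \<pi>"
  shows "law_at K \<pi> t = \<pi>"
  using assms by (induction t) (simp_all add: law_at_Suc)

lemma inv_dist_eq_ergodic_limit:
  assumes kernel: "markov_kernel_on X K" and "X \<noteq> {}"
    and lim: "\<And>nu. set_pmf nu \<subseteq> X \<Longrightarrow> (\<lambda>t. tv_dist (law_at K nu t) mu) \<longlonglongrightarrow> 0"
  shows "inv_dist X K = mu"
proof -
  obtain i0 where "i0 \<in> X" using \<open>X \<noteq> {}\<close> by blast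
  then have start: "set_pmf (return_pmf i0) \<subseteq> X" by simp
  have pmf_lim: "(\<lambda>t. pmf (law_at K nu t) j) \<longlonglongrightarrow> pmf mu j" if "set_pmf nu \<subseteq> X" for nu j
    using pmf_tendsto_of_tv_dist_tendsto[OF lim[OF that]] .
  have "measure_pmf.prob mu (- X) = 0"
  proof (rule LIMSEQ_unique[OF prob_tendsto_of_tv_dist_tendsto[OF lim[OF start]]])
    have "measure_pmf.prob (law_at K (return_pmf i0) t) (- X) = 0" for t
      using set_pmf_law_at_subset[OF kernel start] by (auto simp: measure_pmf_zero_iff)
    then show "(\<lambda>t. measure_pmf.prob (law_at K (return_pmf i0) t) (- X)) \<longlonglongrightarrow> 0"
      by simp
  qed
  then have supp: "set_pmf mu \<subseteq> X"
    by (auto simp: measure_pmf_zero_iff)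
  have "bind_pmf mu K = mu"
  proof (rule pmf_eqI_le)
    fix j
    show "pmf (bind_pmf mu K) j \<le> pmf mu j"
      using pmf_lim[OF start] LIMSEQ_Suc[OF pmf_lim[OF start]]
      by (intro pmf_bind_le_of_pmf_tendsto) (simp_all add: law_at_Suc)
  qed
  then have invariant: "invariant_distribution X K mu"
    using supp by (simp add: invariant_distribution_def)
  have unique: "\<pi> = mu" if "invariant_distribution X K \<pi>" for \<pi>
  proof (rule pmf_eqI)
    fix j
    have "(\<lambda>t. pmf (law_at K \<pi> t) j) \<longlonglongrightarrow> pmf mu j"
      using that pmf_lim by (simp add: invariant_distribution_def)
    then show "pmf \<pi> j = pmf mu j"
      using that by (simp add: invariant_distribution_def law_at_invariant LIMSEQ_const_iff)
  qed
  show ?thesis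
    unfolding inv_dist_def using invariant unique by (rule the_equality)
qed

lemma pmf_law_at_tendsto_inv_dist:
  assumes kernel: "markov_kernel_on X K" and "ergodic_chain X K" and start: "set_pmf mu0 \<subseteq> X"
  shows "(\<lambda>t. pmf (law_at K mu0 t) i) \<longlonglongrightarrow> pmf (inv_dist X K) i"
proof -
  obtain mu where lim: "\<And>nu. set_pmf nu \<subseteq> X \<Longrightarrow> (\<lambda>t. tv_dist (law_at K nu t) mu) \<longlonglongrightarrow> 0"
    using \<open>ergodic_chain X K\<close> unfolding ergodic_chain_def by blast
  have "X \<noteq> {}"
    using start set_pmf_not_empty[of mu0] by blast
  then show ?thesis
    using inv_dist_eq_ergodic_limit[OF kernel _ lim] pmf_tendsto_of_tv_dist_tendsto[OF lim[OF start]]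
    by simp
qed

lemma borel_measurable_nn_integral_count_space:
  fixes f :: "'b \<Rightarrow> 'a \<Rightarrow> ennreal"
  assumes "countable A" and f: "\<And>i. i \<in> A \<Longrightarrow> (\<lambda>\<theta>. f \<theta> i) \<in> borel_measurable M"
  shows "(\<lambda>\<theta>. \<integral>\<^sup>+ i. f \<theta> i \<partial>count_space A) \<in> borel_measurable M"
proof -
  interpret sigma_finite_measure "count_space A"
    using \<open>countable A\<close> by (rule sigma_finite_measure_count_space_countable)
  have "(\<lambda>(i, \<theta>). f \<theta> i) \<in> borel_measurable (count_space A \<Otimes>\<^sub>M M)"
    using \<open>countable A\<close> by (rule measurable_pair_measure_countable1) (simp add: f)
  then have "(\<lambda>(\<theta>, i). f \<theta> i) \<in> borel_measurable (M \<Otimes>\<^sub>M count_space A)"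
    by (subst measurable_pair_swap_iff) simp
  then show ?thesis
    by (rule borel_measurable_nn_integral[where f=f])
qed

lemma infsum_nonneg_eq_nn_integral:
  fixes f :: "'a \<Rightarrow> real"
  assumes nonneg: "\<And>i. i \<in> A \<Longrightarrow> f i \<ge> 0"
  shows "infsum f A = enn2real (\<integral>\<^sup>+ i. ennreal (f i) \<partial>count_space A)"
proof -
  have norm_eq: "(\<lambda>i. norm (f i)) summable_on A \<longleftrightarrow> f summable_on A"
    using nonneg by (intro summable_on_cong) simp
  show ?thesis
  proof (cases "f summable_on A")
    case True
    then have abs: "Infinite_Set_Sum.abs_summable_on f A"
      using norm_eq abs_summable_equivalent by blast
    have "(\<integral>\<^sup>+ i. ennreal (f i) \<partial>count_space A) = ennreal (infsetsum f A)"
      using abs nonneg by (rule nn_integral_conv_infsetsum)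
    then show ?thesis
      using infsetsum_infsum[OF abs] infsetsum_nonneg[of A f] nonneg by simp
  next
    case False
    have "\<not> integrable (count_space A) f"
      using False norm_eq abs_summable_equivalent abs_summable_summable
      by (auto simp: abs_summable_on_def)
    then have "(\<integral>\<^sup>+ i. ennreal (norm (f i)) \<partial>count_space A) = \<infinity>"
      by (auto intro: integrableI_bounded simp: top.not_eq_extremum)
    then have "(\<integral>\<^sup>+ i. ennreal (f i) \<partial>count_space A) = \<infinity>"
      using nonneg by (subst (asm) nn_integral_cong[where v="\<lambda>i. ennreal (f i)"]) auto
    with False show ?thesis
      by (simp add: infsum_not_exists)
  qed
qed

lemma borel_measurable_infsum_nonneg:
  fixes f :: "'b \<Rightarrow> 'a \<Rightarrow> real"
  assumes "countable A" and f: "\<And>i. i \<in> A \<Longrightarrow> (\<lambda>\<theta>. f \<theta> i) \<in> borel_measurable M"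
    and nonneg: "\<And>\<theta> i. \<theta> \<in> space M \<Longrightarrow> i \<in> A \<Longrightarrow> f \<theta> i \<ge> 0"
  shows "(\<lambda>\<theta>. \<Sum>\<^sub>\<infinity>i\<in>A. f \<theta> i) \<in> borel_measurable M"
proof -
  have "(\<lambda>\<theta>. enn2real (\<integral>\<^sup>+ i. ennreal (f \<theta> i) \<partial>count_space A)) \<in> borel_measurable M"
    using \<open>countable A\<close> f
    by (intro borel_measurable_enn2real borel_measurable_nn_integral_count_space
        measurable_compose[OF _ measurable_ennreal])
  then show ?thesis
    by (rule measurable_cong[THEN iffD1, rotated]) (simp add: infsum_nonneg_eq_nn_integral nonneg)
qed

lemma pmf_bind_eq_infsum:
  assumes "set_pmf p \<subseteq> A"
  shows "pmf (bind_pmf p K) j = (\<Sum>\<^sub>\<infinity>i\<in>A. pmf p i * pmf (K i) j)"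
proof -
  have "ennreal (pmf (bind_pmf p K) j) = (\<integral>\<^sup>+ i. ennreal (pmf p i * pmf (K i) j) \<partial>count_space UNIV)"
    by (simp add: ennreal_pmf_bind nn_integral_measure_pmf ennreal_mult'')
  also have "\<dots> = (\<integral>\<^sup>+ i. ennreal (pmf p i * pmf (K i) j) * indicator A i \<partial>count_space UNIV)"
    using assms by (intro nn_integral_cong) (auto simp: indicator_def set_pmf_iff)
  also have "\<dots> = (\<integral>\<^sup>+ i. ennreal (pmf p i * pmf (K i) j) \<partial>count_space A)"
    by (simp add: nn_integral_count_space_indicator)
  finally have "pmf (bind_pmf p K) j = enn2real (\<integral>\<^sup>+ i. ennreal (pmf p i * pmf (K i) j) \<partial>count_space A)"
    by (metis enn2real_ennreal pmf_nonneg)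
  then show ?thesis
    by (simp add: infsum_nonneg_eq_nn_integral)
qed

lemma borel_measurable_pmf_law_at:
  assumes "countable X" and kernel: "\<And>\<theta>. \<theta> \<in> space M \<Longrightarrow> markov_kernel_on X (K \<theta>)"
    and entries: "\<And>i j. i \<in> X \<Longrightarrow> j \<in> X \<Longrightarrow> (\<lambda>\<theta>. pmf (K \<theta> i) j) \<in> borel_measurable M"
    and start: "set_pmf mu0 \<subseteq> X" and "j \<in> X"
  shows "(\<lambda>\<theta>. pmf (law_at (K \<theta>) mu0 t) j) \<in> borel_measurable M"
  using \<open>j \<in> X\<close>
proof (induction t arbitrary: j)
  case 0
  then show ?case by simp
next
  case (Suc t)
  have "(\<lambda>\<theta>. \<Sum>\<^sub>\<infinity>i\<in>X. pmf (law_at (K \<theta>) mu0 t) i * pmf (K \<theta> i) j) \<in> borel_measurable M"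
    using \<open>countable X\<close> by (intro borel_measurable_infsum_nonneg borel_measurable_times
        Suc.IH entries Suc.prems) simp_all
  moreover have "pmf (law_at (K \<theta>) mu0 (Suc t)) j =
      (\<Sum>\<^sub>\<infinity>i\<in>X. pmf (law_at (K \<theta>) mu0 t) i * pmf (K \<theta> i) j)" if "\<theta> \<in> space M" for \<theta>
    unfolding law_at_Suc using set_pmf_law_at_subset[OF kernel[OF that] start]
    by (rule pmf_bind_eq_infsum)
  ultimately show ?case
    by (subst measurable_cong) auto
qed

lemma borel_measurable_pmf_inv_dist:
  assumes "countable X" and kernel: "\<And>\<theta>. \<theta> \<in> space M \<Longrightarrow> markov_kernel_on X (K \<theta>)"
    and ergodic: "\<And>\<theta>. \<theta> \<in> space M \<Longrightarrow> ergodic_chain X (K \<theta>)"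
    and entries: "\<And>i j. i \<in> X \<Longrightarrow> j \<in> X \<Longrightarrow> (\<lambda>\<theta>. pmf (K \<theta> i) j) \<in> borel_measurable M"
    and "i \<in> X"
  shows "(\<lambda>\<theta>. pmf (inv_dist X (K \<theta>)) i) \<in> borel_measurable M"
proof (rule borel_measurable_LIMSEQ_real)
  have start: "set_pmf (return_pmf i) \<subseteq> X"
    using \<open>i \<in> X\<close> by simp
  show "(\<lambda>t. pmf (law_at (K \<theta>) (return_pmf i) t) i) \<longlonglongrightarrow> pmf (inv_dist X (K \<theta>)) i"
    if "\<theta> \<in> space M" for \<theta>
    using kernel[OF that] ergodic[OF that] start by (rule pmf_law_at_tendsto_inv_dist)
  show "(\<lambda>\<theta>. pmf (law_at (K \<theta>) (return_pmf i) t) i) \<in> borel_measurable M" for t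
    using \<open>countable X\<close> kernel entries start \<open>i \<in> X\<close> by (rule borel_measurable_pmf_law_at)
qed

theorem lemma6:
  fixes X :: "real set" and \<Theta> :: "(real ^ 'm) set"
    and K :: "real ^ 'm \<Rightarrow> real \<Rightarrow> real pmf"
  assumes "countable X"
    and "\<And>\<theta>. \<theta> \<in> \<Theta> \<Longrightarrow> markov_kernel_on X (K \<theta>)"
    and "\<And>\<theta>. \<theta> \<in> \<Theta> \<Longrightarrow> ergodic_chain X (K \<theta>)"
    and "\<And>i j. i \<in> X \<Longrightarrow> j \<in> X \<Longrightarrow>
           (\<lambda>\<theta>. pmf (K \<theta> i) j) \<in> borel_measurable (restrict_space borel \<Theta>)"
  shows "(\<lambda>\<theta>. Fhat X (K \<theta>) x x') \<in> borel_measurable (restrict_space borel \<Theta>)"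
proof -
  have countable: "countable {i \<in> X. i \<le> a}" for a
    using \<open>countable X\<close> by (rule countable_subset[rotated]) auto
  have "(\<lambda>\<theta>. pmf (inv_dist X (K \<theta>)) i) \<in> borel_measurable (restrict_space borel \<Theta>)"
    if "i \<in> X" for i
    using assms that by (intro borel_measurable_pmf_inv_dist) (auto simp: space_restrict_space)
  then show ?thesis
    unfolding Fhat_def using assms(4)
    by (intro borel_measurable_infsum_nonneg borel_measurable_times countable)
       (auto intro: infsum_nonneg)
qed

end
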